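(* Let $\mathcal X$ and $\mathcal Y$ be polytopes with $p$ and $q$ vertices respectively, and let $\mathcal L(x,y)=x^\top My$ for a matrix $M$. Then the SP-FW algorithm with step size $\gamma_t=\frac1{t+1}$ satisfies $h(z^{(t)})=O\big(t^{-\frac1{p+q-2}}\big)$.
   Context: SP-FW algorithm: start from $z^{(0)}\in\mathcal X\times\mathcal Y$; at iteration $t$ compute $r^{(t)}:=(\nabla_x\mathcal L(z^{(t)}),-\nabla_y\mathcal L(z^{(t)}))$, $s^{(t)}\in\arg\min_{s\in\mathcal X\times\mathcal Y}\langle s,r^{(t)}\rangle$, and set $z^{(t+1)}:=(1-\gamma_t)z^{(t)}+\gamma_ts^{(t)}$. For $z=(x,y)$, $h(z):=\max_{y'\in\mathcal Y}\mathcal L(x,y')-\min_{x'\in\mathcal X}\mathcal L(x',y)$. *)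

theory Defs
  imports "HOL-Analysis.Analysis" "HOL-Library.Landau_Symbols"
begin

definition bilin :: "real^'m^'n \<Rightarrow> real^'n \<Rightarrow> real^'m \<Rightarrow> real" where
  "bilin M x y = x \<bullet> (M *v y)"

definition dgap :: "real^'m^'n \<Rightarrow> (real^'n) set \<Rightarrow> (real^'m) set
                    \<Rightarrow> (real^'n) \<times> (real^'m) \<Rightarrow> real" where
  "dgap M X Y z = (SUP y'\<in>Y. bilin M (fst z) y') - (INF x'\<in>X. bilin M x' (snd z))"

text \<open>Gradient field r(z) = (grad_x L(z), - grad_y L(z)) for the bilinear L.\<close>
definition spfw_r :: "real^'m^'n \<Rightarrow> (real^'n) \<times> (real^'m) \<Rightarrow> (real^'n) \<times> (real^'m)" where
  "spfw_r M z = (M *v snd z, - (transpose M *v fst z))"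

end

theory Submission
  imports Defs
begin

(*
  With step size 1/(t+1) the iterate z^(t) is the average of the first t oracle answers s^(k).
  Writing each answer as a convex combination of vertices, the scaled payoff vectors
  G_t(v) = t L(v, y^(t)) over the vertices v of X and F_t(w) = t L(x^(t), w) over the vertices w
  of Y form a vector system in the sense of Robinson's analysis of fictitious play: at each step F
  receives a convex combination of rows of the payoff matrix supported where G is minimal, and G a
  combination of columns supported where F is maximal. Robinson's induction on the number N = p + q
  of rows and columns bounds the gap max F_t - min G_t by O(t^(1 - 1/(N - 2))): in a window of
  length L either every row and column becomes extremal, which forces the gap down to O(L), or
  some row or column stays inactive and the window is a smaller system whose gap grows like
  L^(1 - 1/(N - 3)). Choosing L = t^beta balances the two and reproduces the exponent. Finally
  the duality gap at z^(t) is at most that gap divided by t.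
*)

section \<open>Extrema and convex combinations over finite sets\<close>

lemma Min_image_uminus:
  fixes f :: "'a \<Rightarrow> 'b::linordered_ab_group_add"
  shows "finite S \<Longrightarrow> S \<noteq> {} \<Longrightarrow> Min ((\<lambda>x. - f x) ` S) = - Max (f ` S)"
  by (simp add: image_image)

lemma Max_image_uminus:
  fixes f :: "'a \<Rightarrow> 'b::linordered_ab_group_add"
  shows "finite S \<Longrightarrow> S \<noteq> {} \<Longrightarrow> Max ((\<lambda>x. - f x) ` S) = - Min (f ` S)"
  by (simp add: image_image)

lemma Min_image_le_Max_image:
  fixes f :: "'a \<Rightarrow> 'b::linorder"
  assumes "finite S" "S \<noteq> {}"
  shows "Min (f ` S) \<le> Max (f ` S)"
proof -
  obtain x where "x \<in> S"
    using assms(2) by blast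
  then show ?thesis
    using assms(1) by (meson Max_ge Min_le finite_imageI imageI order_trans)
qed

lemma Min_image_ge_close:
  fixes g h :: "'a \<Rightarrow> real"
  assumes "finite S" "S \<noteq> {}" "\<And>x. x \<in> S \<Longrightarrow> \<bar>g x - h x\<bar> \<le> c"
  shows "Min (h ` S) - c \<le> Min (g ` S)"
proof -
  have "Min (g ` S) \<in> g ` S"
    using assms(1,2) by (intro Min_in) auto
  then obtain x where "x \<in> S" "g x = Min (g ` S)"
    by (metis imageE)
  moreover have "Min (h ` S) \<le> h x"
    using \<open>x \<in> S\<close> assms(1) by simp
  ultimately show ?thesis
    using assms(3)[of x] by linarith
qed

lemma Max_image_le_close:
  fixes g h :: "'a \<Rightarrow> real"
  assumes "finite S" "S \<noteq> {}" "\<And>x. x \<in> S \<Longrightarrow> \<bar>g x - h x\<bar> \<le> c"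
  shows "Max (g ` S) \<le> Max (h ` S) + c"
proof -
  have "Min ((\<lambda>x. - h x) ` S) - c \<le> Min ((\<lambda>x. - g x) ` S)"
    using assms by (intro Min_image_ge_close) (auto simp: abs_minus_commute)
  then show ?thesis
    unfolding Min_image_uminus[OF assms(1,2)] by simp
qed

lemma weighted_sum_le:
  fixes w f :: "'a \<Rightarrow> real"
  assumes "\<And>x. x \<in> S \<Longrightarrow> 0 \<le> w x" "\<And>x. x \<in> S \<Longrightarrow> f x \<le> c"
  shows "(\<Sum>x\<in>S. w x * f x) \<le> sum w S * c"
proof -
  have "(\<Sum>x\<in>S. w x * f x) \<le> (\<Sum>x\<in>S. w x * c)"
    using assms by (intro sum_mono mult_left_mono)
  then show ?thesis
    by (simp add: sum_distrib_right)
qed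

lemma weighted_sum_ge:
  fixes w f :: "'a \<Rightarrow> real"
  assumes "\<And>x. x \<in> S \<Longrightarrow> 0 \<le> w x" "\<And>x. x \<in> S \<Longrightarrow> c \<le> f x"
  shows "sum w S * c \<le> (\<Sum>x\<in>S. w x * f x)"
  using weighted_sum_le[of S w "\<lambda>x. - f x" "- c"] assms by (simp add: sum_negf)

lemma convex_combination_abs_le:
  fixes w f :: "'a \<Rightarrow> real"
  assumes "\<And>x. x \<in> S \<Longrightarrow> 0 \<le> w x" "sum w S = 1" "\<And>x. x \<in> S \<Longrightarrow> \<bar>f x\<bar> \<le> c"
  shows "\<bar>\<Sum>x\<in>S. w x * f x\<bar> \<le> c"
proof -
  have "\<bar>\<Sum>x\<in>S. w x * f x\<bar> \<le> (\<Sum>x\<in>S. \<bar>w x * f x\<bar>)"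
    by (rule sum_abs)
  also have "\<dots> = (\<Sum>x\<in>S. w x * \<bar>f x\<bar>)"
    by (intro sum.cong) (simp_all add: abs_mult assms(1))
  also have "\<dots> \<le> sum w S * c"
    using assms(1,3) by (rule weighted_sum_le)
  finally show ?thesis
    using assms(2) by simp
qed

lemma convex_combination_eq_on_support:
  fixes w f :: "'a \<Rightarrow> real"
  assumes "sum w S = 1" "\<And>x. x \<in> S \<Longrightarrow> w x \<noteq> 0 \<Longrightarrow> f x = m"
  shows "(\<Sum>x\<in>S. w x * f x) = m"
proof -
  have "(\<Sum>x\<in>S. w x * f x) = (\<Sum>x\<in>S. w x * m)"
    using assms(2) by (intro sum.cong) auto
  then show ?thesis
    using assms(1) by (simp add: sum_distrib_right[symmetric])
qed

lemma convex_combination_eq_min_support: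
  fixes w f :: "'a \<Rightarrow> real"
  assumes "finite S" "\<And>x. x \<in> S \<Longrightarrow> 0 \<le> w x" "sum w S = 1"
    and "\<And>x. x \<in> S \<Longrightarrow> m \<le> f x" "(\<Sum>x\<in>S. w x * f x) = m"
    and "x \<in> S" "w x \<noteq> 0"
  shows "f x = m"
proof -
  have "(\<Sum>y\<in>S. w y * (f y - m)) = (\<Sum>y\<in>S. w y * f y) - sum w S * m"
    by (simp add: right_diff_distrib sum_subtractf sum_distrib_right)
  then have zero: "(\<Sum>y\<in>S. w y * (f y - m)) = 0"
    using assms(3,5) by simp
  have nonneg: "\<And>y. y \<in> S \<Longrightarrow> 0 \<le> w y * (f y - m)"
    using assms(2,4) by simp
  have "w x * (f x - m) = 0"
    using sum_nonneg_eq_0_iff[OF assms(1) nonneg] zero assms(6) by simp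
  then show ?thesis
    using assms(7) by simp
qed

lemma Min_image_remove:
  fixes g :: "'a \<Rightarrow> 'b::linorder"
  assumes "finite I" "i0 \<in> I" "g i0 \<noteq> Min (g ` I)"
  shows "Min (g ` (I - {i0})) = Min (g ` I)"
proof -
  have "Min (g ` I) \<in> g ` I"
    using assms(1,2) by (intro Min_in) auto
  then obtain i1 where "i1 \<in> I" "g i1 = Min (g ` I)"
    by auto
  with assms(3) have i1: "i1 \<in> I - {i0}" "g i1 = Min (g ` I)"
    by auto
  have "Min (g ` (I - {i0})) \<le> g i1"
    using i1(1) assms(1) by (intro Min_le) auto
  moreover have "Min (g ` I) \<le> Min (g ` (I - {i0}))"
    using i1 assms(1) by (intro Min_antimono) auto
  ultimately show ?thesis
    using i1(2) by simp
qed

section \<open>Robinson's vector systems\<close>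

definition system_gap :: "'a set \<Rightarrow> 'a set \<Rightarrow> ('a \<Rightarrow> real) \<Rightarrow> ('a \<Rightarrow> real) \<Rightarrow> real" where
  "system_gap I J g f = Max (f ` J) - Min (g ` I)"

(* Rows I are chosen by the minimizing player against G, columns J by the maximizing player
   against F; a is the payoff matrix, and lam t, mu t are the mixed strategies played at time t. *)
locale vector_system =
  fixes I J :: "'a set" and a :: "'a \<Rightarrow> 'a \<Rightarrow> real" and A :: real and T :: nat
    and G F lam mu :: "nat \<Rightarrow> 'a \<Rightarrow> real"
  assumes finite_I: "finite I" and finite_J: "finite J"
    and I_nonempty: "I \<noteq> {}" and J_nonempty: "J \<noteq> {}"
    and entry_bound: "\<And>i j. i \<in> I \<Longrightarrow> j \<in> J \<Longrightarrow> \<bar>a i j\<bar> \<le> A"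
    and lam_nonneg: "\<And>t i. t < T \<Longrightarrow> i \<in> I \<Longrightarrow> 0 \<le> lam t i"
    and lam_sum: "\<And>t. t < T \<Longrightarrow> sum (lam t) I = 1"
    and lam_support: "\<And>t i. t < T \<Longrightarrow> i \<in> I \<Longrightarrow> lam t i \<noteq> 0 \<Longrightarrow> G t i = Min (G t ` I)"
    and mu_nonneg: "\<And>t j. t < T \<Longrightarrow> j \<in> J \<Longrightarrow> 0 \<le> mu t j"
    and mu_sum: "\<And>t. t < T \<Longrightarrow> sum (mu t) J = 1"
    and mu_support: "\<And>t j. t < T \<Longrightarrow> j \<in> J \<Longrightarrow> mu t j \<noteq> 0 \<Longrightarrow> F t j = Max (F t ` J)"
    and F_step: "\<And>t j. t < T \<Longrightarrow> j \<in> J \<Longrightarrow> F (Suc t) j = F t j + (\<Sum>i\<in>I. lam t i * a i j)"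
    and G_step: "\<And>t i. t < T \<Longrightarrow> i \<in> I \<Longrightarrow> G (Suc t) i = G t i + (\<Sum>j\<in>J. mu t j * a i j)"
begin

abbreviation gap :: "nat \<Rightarrow> real" where
  "gap t \<equiv> system_gap I J (G t) (F t)"

lemma entry_bound_nonneg: "0 \<le> A"
proof -
  obtain i j where "i \<in> I" "j \<in> J"
    using I_nonempty J_nonempty by blast
  then show ?thesis
    using entry_bound[of i j] by linarith
qed

lemma transposed:
  "vector_system J I (\<lambda>j i. - a i j) A T (\<lambda>t j. - F t j) (\<lambda>t i. - G t i) mu lam"
proof
  fix t assume t: "t < T"
  show "\<And>j. j \<in> J \<Longrightarrow> mu t j \<noteq> 0 \<Longrightarrow> - F t j = Min ((\<lambda>j. - F t j) ` J)"
    using mu_support[OF t] by (simp add: Min_image_uminus[OF finite_J J_nonempty])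
  show "\<And>i. i \<in> I \<Longrightarrow> lam t i \<noteq> 0 \<Longrightarrow> - G t i = Max ((\<lambda>i. - G t i) ` I)"
    using lam_support[OF t] by (simp add: Max_image_uminus[OF finite_I I_nonempty])
  show "\<And>i. i \<in> I \<Longrightarrow> - G (Suc t) i = - G t i + (\<Sum>j\<in>J. mu t j * - a i j)"
    using G_step[OF t] by (simp add: sum_negf)
  show "\<And>j. j \<in> J \<Longrightarrow> - F (Suc t) j = - F t j + (\<Sum>i\<in>I. lam t i * - a i j)"
    using F_step[OF t] by (simp add: sum_negf)
qed (use finite_I finite_J I_nonempty J_nonempty entry_bound lam_nonneg lam_sum mu_nonneg mu_sum in auto)

lemma transposed_gap: "system_gap J I (\<lambda>j. - F t j) (\<lambda>i. - G t i) = gap t"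
  unfolding system_gap_def
  by (simp add: Min_image_uminus[OF finite_J J_nonempty] Max_image_uminus[OF finite_I I_nonempty])

lemma G_increment_abs_le:
  assumes "t < T" "i \<in> I"
  shows "\<bar>G (Suc t) i - G t i\<bar> \<le> A"
  using convex_combination_abs_le[of J "mu t" "a i" A] G_step[OF assms]
    mu_nonneg[OF assms(1)] mu_sum[OF assms(1)] entry_bound[OF assms(2)] by simp

lemma G_drift:
  assumes "u + k \<le> T" "i \<in> I"
  shows "\<bar>G (u + k) i - G u i\<bar> \<le> real k * A"
  using assms(1)
proof (induction k)
  case (Suc k)
  then have "\<bar>G (Suc (u + k)) i - G (u + k) i\<bar> \<le> A" "\<bar>G (u + k) i - G u i\<bar> \<le> real k * A"
    using G_increment_abs_le[OF _ assms(2)] by simp_all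
  then show ?case
    by (simp add: algebra_simps)
qed simp

lemma F_drift:
  assumes "u + k \<le> T" "j \<in> J"
  shows "\<bar>F (u + k) j - F u j\<bar> \<le> real k * A"
proof -
  interpret transp: vector_system J I "\<lambda>j i. - a i j" A T "\<lambda>t j. - F t j" "\<lambda>t i. - G t i" mu lam
    by (rule transposed)
  show ?thesis
    using transp.G_drift[OF assms] by linarith
qed

lemma gap_drift:
  assumes "u + k \<le> T"
  shows "gap (u + k) \<le> gap u + 2 * real k * A"
proof -
  have "Max (F (u + k) ` J) \<le> Max (F u ` J) + real k * A"
    using F_drift[OF assms] by (intro Max_image_le_close finite_J J_nonempty)
  moreover have "Min (G u ` I) - real k * A \<le> Min (G (u + k) ` I)"
    using G_drift[OF assms] by (intro Min_image_ge_close finite_I I_nonempty)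
  ultimately show ?thesis
    unfolding system_gap_def by linarith
qed

lemma G_spread_le:
  assumes "s + L \<le> T"
    and attained: "\<And>i. i \<in> I \<Longrightarrow> \<exists>u\<in>{s..s + L}. G u i = Min (G u ` I)"
  shows "Max (G (s + L) ` I) - Min (G (s + L) ` I) \<le> 2 * real L * A"
proof -
  have "G (s + L) i \<le> Min (G (s + L) ` I) + 2 * real L * A" if i: "i \<in> I" for i
  proof -
    obtain u where u: "s \<le> u" "u \<le> s + L" "G u i = Min (G u ` I)"
      using attained[OF i] by auto
    define k where "k = s + L - u"
    have uk: "u + k = s + L" and kL: "real k * A \<le> real L * A"
      using u entry_bound_nonneg by (simp_all add: k_def mult_right_mono)
    have drift: "\<bar>G (u + k) i' - G u i'\<bar> \<le> real k * A" if "i' \<in> I" for i'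
      using G_drift[of u k i'] that assms(1) unfolding uk by blast
    have "Min (G u ` I) - real k * A \<le> Min (G (u + k) ` I)"
      using drift by (intro Min_image_ge_close finite_I I_nonempty)
    then have "G (u + k) i \<le> Min (G (u + k) ` I) + 2 * real L * A"
      using drift[OF i] u(3) kL by (simp add: abs_le_iff)
    then show ?thesis
      unfolding uk .
  qed
  then have "Max (G (s + L) ` I) \<le> Min (G (s + L) ` I) + 2 * real L * A"
    using finite_I I_nonempty by (intro Max.boundedI) auto
  then show ?thesis
    by linarith
qed

lemma F_spread_le:
  assumes "s + L \<le> T"
    and attained: "\<And>j. j \<in> J \<Longrightarrow> \<exists>u\<in>{s..s + L}. F u j = Max (F u ` J)"
  shows "Max (F (s + L) ` J) - Min (F (s + L) ` J) \<le> 2 * real L * A"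
proof -
  interpret transp: vector_system J I "\<lambda>j i. - a i j" A T "\<lambda>t j. - F t j" "\<lambda>t i. - G t i" mu lam
    by (rule transposed)
  have "Max ((\<lambda>j. - F (s + L) j) ` J) - Min ((\<lambda>j. - F (s + L) j) ` J) \<le> 2 * real L * A"
    using attained by (intro transp.G_spread_le[OF assms(1)])
      (simp add: Min_image_uminus[OF finite_J J_nonempty])
  then show ?thesis
    by (simp add: Min_image_uminus[OF finite_J J_nonempty] Max_image_uminus[OF finite_J J_nonempty])
qed

lemma G_closed_form:
  assumes "t \<le> T" "i \<in> I"
  shows "G t i = G 0 i + (\<Sum>j\<in>J. (\<Sum>k<t. mu k j) * a i j)"
  using assms(1)
proof (induction t)
  case (Suc t)
  then have "G (Suc t) i = G 0 i + (\<Sum>j\<in>J. (\<Sum>k<t. mu k j) * a i j + mu t j * a i j)"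
    using G_step[OF _ assms(2)] by (simp add: sum.distrib)
  then show ?case
    by (simp add: distrib_right)
qed simp

lemma F_closed_form:
  assumes "t \<le> T" "j \<in> J"
  shows "F t j = F 0 j + (\<Sum>i\<in>I. (\<Sum>k<t. lam k i) * a i j)"
proof -
  interpret transp: vector_system J I "\<lambda>j i. - a i j" A T "\<lambda>t j. - F t j" "\<lambda>t i. - G t i" mu lam
    by (rule transposed)
  show ?thesis
    using transp.G_closed_form[OF assms] by (simp add: sum_negf)
qed

lemma Min_F_le_Max_G:
  assumes "gap 0 \<le> 0" "t \<le> T"
  shows "Min (F t ` J) \<le> Max (G t ` I)"
proof (cases "t = 0")
  case True
  then show ?thesis
    using assms(1) Min_image_le_Max_image[OF finite_J J_nonempty, of "F 0"]
      Min_image_le_Max_image[OF finite_I I_nonempty, of "G 0"]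
    unfolding system_gap_def by simp
next
  case False
  define \<Lambda> where "\<Lambda> i = (\<Sum>k<t. lam k i)" for i
  define \<M> where "\<M> j = (\<Sum>k<t. mu k j)" for j
  have \<Lambda>_nonneg: "\<And>i. i \<in> I \<Longrightarrow> 0 \<le> \<Lambda> i" and \<M>_nonneg: "\<And>j. j \<in> J \<Longrightarrow> 0 \<le> \<M> j"
    using lam_nonneg mu_nonneg assms(2) by (auto simp: \<Lambda>_def \<M>_def intro!: sum_nonneg)
  have "sum \<Lambda> I = (\<Sum>k<t. sum (lam k) I)"
    unfolding \<Lambda>_def by (rule sum.swap)
  also have "\<dots> = real t"
    using lam_sum assms(2) by simp
  finally have \<Lambda>_total: "sum \<Lambda> I = real t" .
  have "sum \<M> J = (\<Sum>k<t. sum (mu k) J)"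
    unfolding \<M>_def by (rule sum.swap)
  also have "\<dots> = real t"
    using mu_sum assms(2) by simp
  finally have \<M>_total: "sum \<M> J = real t" .
  \<comment> \<open>The cross term \<open>\<Sum>i j. \<Lambda> i * \<M> j * a i j\<close> appears in both weighted sums and cancels.\<close>
  have "(\<Sum>i\<in>I. \<Lambda> i * G t i) = (\<Sum>i\<in>I. \<Lambda> i * G 0 i) + (\<Sum>i\<in>I. \<Sum>j\<in>J. \<Lambda> i * (\<M> j * a i j))"
    using G_closed_form[OF assms(2)] by (simp add: \<M>_def distrib_left sum.distrib sum_distrib_left)
  moreover have "(\<Sum>j\<in>J. \<M> j * F t j) = (\<Sum>j\<in>J. \<M> j * F 0 j) + (\<Sum>j\<in>J. \<Sum>i\<in>I. \<M> j * (\<Lambda> i * a i j))"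
    using F_closed_form[OF assms(2)] by (simp add: \<Lambda>_def distrib_left sum.distrib sum_distrib_left)
  moreover have "(\<Sum>i\<in>I. \<Sum>j\<in>J. \<Lambda> i * (\<M> j * a i j)) = (\<Sum>j\<in>J. \<Sum>i\<in>I. \<M> j * (\<Lambda> i * a i j))"
    by (subst sum.swap) (simp add: ac_simps)
  ultimately have conserved: "(\<Sum>j\<in>J. \<M> j * F t j) - (\<Sum>i\<in>I. \<Lambda> i * G t i)
      = (\<Sum>j\<in>J. \<M> j * F 0 j) - (\<Sum>i\<in>I. \<Lambda> i * G 0 i)"
    by linarith
  have "real t * Min (F t ` J) \<le> (\<Sum>j\<in>J. \<M> j * F t j)"
    using weighted_sum_ge[of J \<M> "Min (F t ` J)" "F t", OF \<M>_nonneg] finite_J J_nonempty \<M>_total by simp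
  moreover have "(\<Sum>i\<in>I. \<Lambda> i * G t i) \<le> real t * Max (G t ` I)"
    using weighted_sum_le[of I \<Lambda> "G t" "Max (G t ` I)", OF \<Lambda>_nonneg] finite_I I_nonempty \<Lambda>_total by simp
  moreover have "(\<Sum>j\<in>J. \<M> j * F 0 j) \<le> real t * Max (F 0 ` J)"
    using weighted_sum_le[of J \<M> "F 0" "Max (F 0 ` J)", OF \<M>_nonneg] finite_J J_nonempty \<M>_total by simp
  moreover have "real t * Min (G 0 ` I) \<le> (\<Sum>i\<in>I. \<Lambda> i * G 0 i)"
    using weighted_sum_ge[of I \<Lambda> "Min (G 0 ` I)" "G 0", OF \<Lambda>_nonneg] finite_I I_nonempty \<Lambda>_total by simp
  ultimately have "real t * (Min (F t ` J) - Max (G t ` I)) \<le> real t * gap 0"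
    using conserved unfolding system_gap_def by (simp add: algebra_simps)
  then show ?thesis
    using assms(1) False by (simp add: mult_le_0_iff)
qed

lemma gap_after_all_extremal:
  assumes "gap 0 \<le> 0" "s + L \<le> T"
    and "\<And>i. i \<in> I \<Longrightarrow> \<exists>u\<in>{s..s + L}. G u i = Min (G u ` I)"
    and "\<And>j. j \<in> J \<Longrightarrow> \<exists>u\<in>{s..s + L}. F u j = Max (F u ` J)"
  shows "gap (s + L) \<le> 4 * real L * A"
  using G_spread_le[OF assms(2,3)] F_spread_le[OF assms(2,4)] Min_F_le_Max_G[OF assms(1,2)]
  unfolding system_gap_def by linarith

lemma gap_single_row:
  assumes "card I = 1" "t < T"
  shows "gap t \<le> gap 0 + 2 * A"
proof -
  obtain i0 where I: "I = {i0}"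
    using assms(1) card_1_singletonE by blast
  define c where "c k = (\<Sum>j\<in>J. mu k j * a i0 j)" for k
  have c_bound: "\<bar>c k\<bar> \<le> A" if "k < T" for k
    unfolding c_def using that mu_nonneg mu_sum entry_bound
    by (intro convex_combination_abs_le) (auto simp: I)
  have gap_eq: "gap k = Max (F k ` J) - G k i0" for k
    unfolding system_gap_def I by simp
  have descent: "gap (Suc k) - c (Suc k) \<le> gap k - c k" if k: "Suc k < T" for k
  proof -
    have "Max (F (Suc k) ` J) = (\<Sum>j\<in>J. mu (Suc k) j * F (Suc k) j)"
      using mu_support[OF k] mu_sum[OF k] by (intro convex_combination_eq_on_support[symmetric]) auto
    also have "\<dots> = (\<Sum>j\<in>J. mu (Suc k) j * F k j) + c (Suc k)"
      using F_step[of k] lam_sum[of k] k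
      by (simp add: I c_def distrib_left sum.distrib)
    also have "\<dots> \<le> Max (F k ` J) + c (Suc k)"
      using weighted_sum_le[of J "mu (Suc k)" "F k" "Max (F k ` J)", OF mu_nonneg[OF k]] mu_sum[OF k]
        finite_J J_nonempty
      by simp
    finally show ?thesis
      using G_step[of k i0] k unfolding gap_eq by (simp add: I c_def)
  qed
  have "gap k - c k \<le> gap 0 - c 0" if "k < T" for k
    using that
  proof (induction k)
    case (Suc k)
    then show ?case
      using descent[of k] by simp
  qed simp
  moreover have "c t \<le> A" "- c 0 \<le> A"
    using abs_le_D1[OF c_bound[OF assms(2)]] abs_le_D2[OF c_bound[of 0]] assms(2) by simp_all
  ultimately show ?thesis
    using assms(2) by fastforce
qed

lemma gap_single_col:
  assumes "card J = 1" "t < T"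
  shows "gap t \<le> gap 0 + 2 * A"
proof -
  interpret transp: vector_system J I "\<lambda>j i. - a i j" A T "\<lambda>t j. - F t j" "\<lambda>t i. - G t i" mu lam
    by (rule transposed)
  show ?thesis
    using transp.gap_single_row[OF assms] by (simp add: transposed_gap)
qed

lemma restrict_inactive_row:
  assumes i0: "i0 \<in> I" and card_I: "2 \<le> card I" and window: "s + L < T"
    and inactive: "\<forall>u\<in>{s..s + L}. G u i0 \<noteq> Min (G u ` I)"
  shows "vector_system (I - {i0}) J a A (Suc L) (\<lambda>u i. G (s + u) i + gap s) (\<lambda>u. F (s + u))
           (\<lambda>u. lam (s + u)) (\<lambda>u. mu (s + u))"
    and "u \<le> L \<Longrightarrow> system_gap (I - {i0}) J (\<lambda>i. G (s + u) i + gap s) (F (s + u)) = gap (s + u) - gap s"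
proof -
  \<comment> \<open>The shift by \<open>gap s\<close> makes the restricted system start with gap 0.\<close>
  let ?I = "I - {i0}" and ?G = "\<lambda>u i. G (s + u) i + gap s"
  have "card ?I = card I - 1"
    using finite_I i0 by simp
  then have "0 < card ?I"
    using card_I by simp
  then have I_restricted_nonempty: "?I \<noteq> {}"
    by (simp add: card_gt_0_iff)
  have Min_restricted: "Min (G (s + u) ` ?I) = Min (G (s + u) ` I)" if "u \<le> L" for u
    using inactive that by (intro Min_image_remove finite_I i0) auto
  have lam_i0: "lam (s + u) i0 = 0" if "u \<le> L" for u
    using lam_support[of "s + u" i0] inactive that window i0 by auto
  have sum_restricted: "(\<Sum>i\<in>?I. lam (s + u) i * f i) = (\<Sum>i\<in>I. lam (s + u) i * f i)"
    if "u \<le> L" for u and f :: "'a \<Rightarrow> real"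
    using sum.remove[OF finite_I i0, of "\<lambda>i. lam (s + u) i * f i"] lam_i0[OF that] by simp
  have Min_shifted: "Min (?G u ` ?I) = Min (G (s + u) ` I) + gap s" if "u \<le> L" for u
    using Min_add_commute[OF finite_Diff[OF finite_I] I_restricted_nonempty, of "G (s + u)" "gap s"]
      Min_restricted[OF that] by simp
  show "system_gap ?I J (?G u) (F (s + u)) = gap (s + u) - gap s" if "u \<le> L"
    using Min_shifted[OF that] unfolding system_gap_def by linarith
  show "vector_system ?I J a A (Suc L) ?G (\<lambda>u. F (s + u)) (\<lambda>u. lam (s + u)) (\<lambda>u. mu (s + u))"
  proof
    fix u assume "u < Suc L"
    then have u: "u \<le> L" and su: "s + u < T"
      using window by simp_all
    show "sum (lam (s + u)) ?I = 1"
      using sum_restricted[OF u, of "\<lambda>_. 1"] lam_sum[OF su] by simp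
    show "\<And>i. i \<in> ?I \<Longrightarrow> lam (s + u) i \<noteq> 0 \<Longrightarrow> ?G u i = Min (?G u ` ?I)"
      using lam_support[OF su] Min_shifted[OF u] by simp
    show "\<And>j. j \<in> J \<Longrightarrow> F (s + Suc u) j = F (s + u) j + (\<Sum>i\<in>?I. lam (s + u) i * a i j)"
      using F_step[OF su] sum_restricted[OF u] by simp
    show "\<And>i. i \<in> ?I \<Longrightarrow> ?G (Suc u) i = ?G u i + (\<Sum>j\<in>J. mu (s + u) j * a i j)"
      using G_step[OF su] by simp
  qed (use finite_I finite_J I_restricted_nonempty J_nonempty entry_bound lam_nonneg mu_nonneg
        mu_sum mu_support window in auto)
qed

lemma gap_window_inactive_row:
  assumes smaller: "\<And>(I' :: 'a set) J' a' T' G' F' lam' mu'. vector_system I' J' a' A T' G' F' lam' mu' \<Longrightarrow>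
      Suc (card I' + card J') = card I + card J \<Longrightarrow> system_gap I' J' (G' 0) (F' 0) \<le> 0 \<Longrightarrow>
      L < T' \<Longrightarrow> system_gap I' J' (G' L) (F' L) \<le> B"
    and "i0 \<in> I" "2 \<le> card I" "s + L < T"
    and "\<forall>u\<in>{s..s + L}. G u i0 \<noteq> Min (G u ` I)"
  shows "gap (s + L) \<le> gap s + B"
proof -
  note restricted = restrict_inactive_row[OF assms(2-5)]
  have "Suc (card (I - {i0}) + card J) = card I + card J"
    using assms(2,3) finite_I by simp
  then have "gap (s + L) - gap s \<le> B"
    using smaller[OF restricted(1)] restricted(2)[of 0] restricted(2)[of L] by simp
  then show ?thesis
    by simp
qed

lemma gap_window_inactive_col:
  assumes smaller: "\<And>(I' :: 'a set) J' a' T' G' F' lam' mu'. vector_system I' J' a' A T' G' F' lam' mu' \<Longrightarrow>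
      Suc (card I' + card J') = card I + card J \<Longrightarrow> system_gap I' J' (G' 0) (F' 0) \<le> 0 \<Longrightarrow>
      L < T' \<Longrightarrow> system_gap I' J' (G' L) (F' L) \<le> B"
    and "j0 \<in> J" "2 \<le> card J" "s + L < T"
    and inactive: "\<forall>u\<in>{s..s + L}. F u j0 \<noteq> Max (F u ` J)"
  shows "gap (s + L) \<le> gap s + B"
proof -
  interpret transp: vector_system J I "\<lambda>j i. - a i j" A T "\<lambda>t j. - F t j" "\<lambda>t i. - G t i" mu lam
    by (rule transposed)
  have "system_gap J I (\<lambda>j. - F (s + L) j) (\<lambda>i. - G (s + L) i)
      \<le> system_gap J I (\<lambda>j. - F s j) (\<lambda>i. - G s i) + B"
  proof (rule transp.gap_window_inactive_row[OF _ assms(2-4)])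
    show "\<forall>u\<in>{s..s + L}. - F u j0 \<noteq> Min ((\<lambda>j. - F u j) ` J)"
      using inactive by (simp add: Min_image_uminus[OF finite_J J_nonempty])
  qed (use smaller in \<open>simp add: add.commute\<close>)
  then show ?thesis
    by (simp add: transposed_gap)
qed

lemma gap_window:
  assumes smaller: "\<And>(I' :: 'a set) J' a' T' G' F' lam' mu'. vector_system I' J' a' A T' G' F' lam' mu' \<Longrightarrow>
      Suc (card I' + card J') = card I + card J \<Longrightarrow> system_gap I' J' (G' 0) (F' 0) \<le> 0 \<Longrightarrow>
      L < T' \<Longrightarrow> system_gap I' J' (G' L) (F' L) \<le> B"
    and "2 \<le> card I" "2 \<le> card J" "gap 0 \<le> 0" "s + L < T"
  shows "gap (s + L) \<le> max (4 * real L * A) (gap s + B)"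
proof (cases "(\<forall>i\<in>I. \<exists>u\<in>{s..s + L}. G u i = Min (G u ` I)) \<and>
              (\<forall>j\<in>J. \<exists>u\<in>{s..s + L}. F u j = Max (F u ` J))")
  case True
  then have "gap (s + L) \<le> 4 * real L * A"
    using assms(4,5) by (intro gap_after_all_extremal) auto
  then show ?thesis
    by simp
next
  case False
  then consider
      (row) i0 where "i0 \<in> I" "\<forall>u\<in>{s..s + L}. G u i0 \<noteq> Min (G u ` I)"
    | (col) j0 where "j0 \<in> J" "\<forall>u\<in>{s..s + L}. F u j0 \<noteq> Max (F u ` J)"
    by blast
  then have "gap (s + L) \<le> gap s + B"
  proof cases
    case row
    show ?thesis
      by (rule gap_window_inactive_row[OF _ row(1) assms(2,5) row(2)]) (fact smaller)
  next
    case col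
    show ?thesis
      by (rule gap_window_inactive_col[OF _ col(1) assms(3,5) col(2)]) (fact smaller)
  qed
  then show ?thesis
    by simp
qed

end

lemma windowed_growth_bound:
  fixes g :: "nat \<Rightarrow> real"
  assumes "1 \<le> L" "0 \<le> B"
    and initial: "\<And>u. u < L \<Longrightarrow> u \<le> t \<Longrightarrow> g u \<le> C"
    and window: "\<And>s. s + L \<le> t \<Longrightarrow> g (s + L) \<le> max C (g s + B)"
  shows "g t \<le> C + real (t div L) * B"
proof -
  define r where "r = t mod L"
  have t_eq: "r + (t div L) * L = t"
    unfolding r_def by simp
  have "g (r + j * L) \<le> C + real j * B" if "j \<le> t div L" for j
    using that
  proof (induction j)
    case 0
    have "r < L" "r \<le> t"
      unfolding r_def using assms(1) by simp_all
    then show ?case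
      using initial by simp
  next
    case (Suc j)
    then have "Suc j * L \<le> (t div L) * L"
      by (intro mult_le_mono1) simp
    then have "(r + j * L) + L \<le> t"
      using t_eq by simp
    then have "g ((r + j * L) + L) \<le> max C (g (r + j * L) + B)"
      by (rule window)
    moreover have "C \<le> C + real (Suc j) * B" "g (r + j * L) + B \<le> C + real (Suc j) * B"
      using Suc assms(2) by (simp_all add: algebra_simps)
    ultimately have "g ((r + j * L) + L) \<le> C + real (Suc j) * B"
      by (meson max.bounded_iff order_trans)
    then show ?case
      by (simp add: algebra_simps)
  qed
  then show ?thesis
    using t_eq by (metis order_refl)
qed

lemma (in vector_system) gap_windowed_bound:
  assumes smaller: "\<And>(I' :: 'a set) J' a' T' G' F' lam' mu'. vector_system I' J' a' A T' G' F' lam' mu' \<Longrightarrow>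
      Suc (card I' + card J') = card I + card J \<Longrightarrow> system_gap I' J' (G' 0) (F' 0) \<le> 0 \<Longrightarrow>
      L < T' \<Longrightarrow> system_gap I' J' (G' L) (F' L) \<le> B"
    and "2 \<le> card I" "2 \<le> card J" and gap0: "gap 0 \<le> 0" and "t < T" "1 \<le> L" "0 \<le> B"
  shows "gap t \<le> 4 * real L * A + real (t div L) * B"
proof (rule windowed_growth_bound[OF \<open>1 \<le> L\<close> \<open>0 \<le> B\<close>])
  show "gap u \<le> 4 * real L * A" if "u < L" "u \<le> t" for u
  proof -
    have "gap u \<le> 2 * real u * A"
      using gap_drift[of 0 u] gap0 that \<open>t < T\<close> by simp
    also have "\<dots> \<le> 4 * real L * A"
      using that entry_bound_nonneg by (intro mult_right_mono) auto
    finally show ?thesis .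
  qed
  show "gap (s + L) \<le> max (4 * real L * A) (gap s + B)" if "s + L \<le> t" for s
    by (rule gap_window) (use smaller assms(2,3) gap0 that \<open>t < T\<close> in auto)
qed

lemma window_balance:
  fixes t :: nat and K A \<alpha> :: real
  assumes t: "1 \<le> t" and \<alpha>: "0 \<le> \<alpha>" "\<alpha> < 1" and "0 \<le> K" "0 \<le> A"
  defines "\<beta> \<equiv> 1 / (2 - \<alpha>)"
  defines "L \<equiv> nat \<lceil>real t powr \<beta>\<rceil>"
  shows "1 \<le> L"
    and "4 * real L * A + real (t div L) * (K * A * real L powr \<alpha>) \<le> (8 + K) * A * real t powr \<beta>"
proof -
  define x where "x = real t powr \<beta>"
  have "0 < \<beta>"
    unfolding \<beta>_def using \<alpha> by simp
  then have x: "1 \<le> x"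
    unfolding x_def using t by (intro ge_one_powr_ge_zero) auto
  have "real L = real_of_int \<lceil>x\<rceil>"
    unfolding L_def x_def[symmetric] using x by simp
  then have x_le_L: "x \<le> real L" and L_le: "real L \<le> 2 * x"
    using x by linarith+
  then show "1 \<le> L"
    using x by linarith
  then have L_pos: "0 < real L"
    by simp
  \<comment> \<open>\<open>t / L * L powr \<alpha>\<close> is at most \<open>t * x powr (\<alpha> - 1) = t powr \<beta>\<close>, by the choice of \<open>\<beta>\<close>.\<close>
  have "real (t div L) * (K * A * real L powr \<alpha>) \<le> real t / real L * (K * A * real L powr \<alpha>)"
    using assms(4,5) by (intro mult_right_mono of_nat_div_le_of_nat) auto
  also have "\<dots> = K * A * (real t * real L powr (\<alpha> - 1))"
    using L_pos by (simp add: powr_diff)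
  also have "real L powr (\<alpha> - 1) \<le> x powr (\<alpha> - 1)"
    using x x_le_L \<alpha> by (intro powr_mono2') auto
  also have "real t * x powr (\<alpha> - 1) = real t powr (1 + \<beta> * (\<alpha> - 1))"
    unfolding x_def using t by (simp add: powr_powr powr_add)
  also have "1 + \<beta> * (\<alpha> - 1) = \<beta>"
    unfolding \<beta>_def using \<alpha> by (simp add: field_simps)
  finally have "real (t div L) * (K * A * real L powr \<alpha>) \<le> K * A * x"
    unfolding x_def using assms(4,5) t by (simp add: mult_left_mono)
  moreover have "4 * real L * A \<le> 8 * x * A"
    using L_le assms(5) by (intro mult_right_mono) auto
  ultimately show "4 * real L * A + real (t div L) * (K * A * real L powr \<alpha>) \<le> (8 + K) * A * real t powr \<beta>"
    unfolding x_def by (simp add: algebra_simps)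
qed

(* For N = 2 the division by zero gives exponent 1; that case only arises for a single row and
   column, where the gap is bounded outright. *)
definition robinson_exponent :: "nat \<Rightarrow> real" where
  "robinson_exponent N = 1 - 1 / (real N - 2)"

lemma robinson_exponent_nonneg: "2 \<le> N \<Longrightarrow> 0 \<le> robinson_exponent N"
  unfolding robinson_exponent_def by (cases "N = 2") (simp_all add: divide_le_eq_1)

lemma robinson_exponent_less_one: "3 \<le> N \<Longrightarrow> robinson_exponent N < 1"
  unfolding robinson_exponent_def by simp

lemma robinson_exponent_Suc: "3 \<le> N \<Longrightarrow> robinson_exponent (Suc N) = 1 / (2 - robinson_exponent N)"
  unfolding robinson_exponent_def by (simp add: field_simps)

lemma robinson_window_bound:
  assumes "1 \<le> t" "3 \<le> N" "0 \<le> A"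
  defines "L \<equiv> nat \<lceil>real t powr robinson_exponent (Suc N)\<rceil>"
  shows "1 \<le> L"
    and "4 * real L * A + real (t div L) * (8 * real N * A * real L powr robinson_exponent N)
      \<le> 8 * real (Suc N) * A * real t powr robinson_exponent (Suc N)"
proof -
  have "0 \<le> robinson_exponent N" "robinson_exponent N < 1" "0 \<le> 8 * real N"
    using assms(2) by (simp_all add: robinson_exponent_nonneg robinson_exponent_less_one)
  note balance = window_balance[OF assms(1) this assms(3),
      folded robinson_exponent_Suc[OF assms(2)], folded L_def]
  then show "1 \<le> L"
    by simp
  show "4 * real L * A + real (t div L) * (8 * real N * A * real L powr robinson_exponent N)
      \<le> 8 * real (Suc N) * A * real t powr robinson_exponent (Suc N)"
    using balance(2) by (simp add: algebra_simps)
qed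

lemma (in vector_system) gap_rate_step:
  assumes smaller: "\<And>(I' :: 'a set) J' a' T' G' F' lam' mu' t'. vector_system I' J' a' A T' G' F' lam' mu' \<Longrightarrow>
      Suc (card I' + card J') = card I + card J \<Longrightarrow> system_gap I' J' (G' 0) (F' 0) \<le> 0 \<Longrightarrow> t' < T' \<Longrightarrow>
      system_gap I' J' (G' t') (F' t')
        \<le> 8 * real (card I' + card J') * A * real t' powr robinson_exponent (card I' + card J')"
    and gap0: "gap 0 \<le> 0" and "t < T"
  shows "gap t \<le> 8 * real (card I + card J) * A * real t powr robinson_exponent (card I + card J)"
    (is "_ \<le> ?bound")
proof -
  define N where "N = card I + card J"
  have card_pos: "1 \<le> card I" "1 \<le> card J"
    using finite_I finite_J I_nonempty J_nonempty by (simp_all add: Suc_le_eq card_gt_0_iff)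
  have A: "0 \<le> A"
    by (rule entry_bound_nonneg)
  consider "t = 0" | "1 \<le> t" "card I = 1 \<or> card J = 1" | "1 \<le> t" "2 \<le> card I" "2 \<le> card J"
    using card_pos by linarith
  then show ?thesis
  proof cases
    case 1
    then show ?thesis
      using gap0 by simp
  next
    case 2
    then have "gap t \<le> 2 * A"
      using gap_single_row gap_single_col gap0 \<open>t < T\<close> by fastforce
    also have "\<dots> \<le> 8 * real N * A * 1"
      using card_pos A mult_right_mono[of 2 "8 * real N" A] unfolding N_def by simp
    also have "\<dots> \<le> 8 * real N * A * real t powr robinson_exponent N"
      using 2 card_pos A robinson_exponent_nonneg[of N] unfolding N_def
      by (intro mult_left_mono ge_one_powr_ge_zero) auto
    finally show ?thesis
      unfolding N_def .
  next
    case 3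
    define N' where "N' = N - 1"
    have N: "N = Suc N'" "3 \<le> N'"
      using 3 unfolding N'_def N_def by simp_all
    define L where "L = nat \<lceil>real t powr robinson_exponent N\<rceil>"
    note window = robinson_window_bound[OF 3(1) N(2) A, folded N(1), folded L_def]
    define B where "B = 8 * real N' * A * real L powr robinson_exponent N'"
    have "gap t \<le> 4 * real L * A + real (t div L) * B"
    proof (rule gap_windowed_bound)
      show "system_gap I' J' (G' L) (F' L) \<le> B"
        if "vector_system I' J' a' A T' G' F' lam' mu'" "Suc (card I' + card J') = card I + card J"
          "system_gap I' J' (G' 0) (F' 0) \<le> 0" "L < T'"
        for I' :: "'a set" and J' a' T' G' F' lam' mu'
      proof -
        have card_eq: "card I' + card J' = N'"
          using that(2) N unfolding N_def by simp
        from smaller[OF that] show ?thesis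
          unfolding B_def card_eq .
      qed
    qed (use 3 gap0 \<open>t < T\<close> window(1) A in \<open>simp_all add: B_def\<close>)
    also have "\<dots> \<le> ?bound"
      using window(2) unfolding B_def N_def .
    finally show ?thesis .
  qed
qed

theorem robinson_gap_bound:
  fixes I :: "'a set"
  assumes "vector_system I J a A T G F lam mu" "system_gap I J (G 0) (F 0) \<le> 0" "t < T"
  shows "system_gap I J (G t) (F t)
    \<le> 8 * real (card I + card J) * A * real t powr robinson_exponent (card I + card J)"
  using assms
proof (induction "card I + card J" arbitrary: I J a T G F lam mu t)
  case 0
  then interpret vector_system I J a A T G F lam mu
    by simp
  show ?case
    using "0.hyps" finite_I I_nonempty by simp
next
  case (Suc N)
  then interpret vector_system I J a A T G F lam mu
    by simp
  show ?case
    by (rule gap_rate_step) (use Suc in auto)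
qed

section \<open>Saddle-point Frank-Wolfe for a bilinear objective on polytopes\<close>

lemma bilin_eq_vector_matrix: "bilin M x y = (x v* M) \<bullet> y"
  unfolding bilin_def by (simp add: dot_lmul_matrix)

lemma bilin_add_left: "bilin M (x + x') y = bilin M x y + bilin M x' y"
  and bilin_scaleR_left: "bilin M (c *\<^sub>R x) y = c * bilin M x y"
  and bilin_sum_left: "bilin M (\<Sum>k\<in>K. f k) y = (\<Sum>k\<in>K. bilin M (f k) y)"
  unfolding bilin_def by (simp_all add: inner_add_left inner_sum_left)

lemma bilin_add_right: "bilin M x (y + y') = bilin M x y + bilin M x y'"
  and bilin_scaleR_right: "bilin M x (c *\<^sub>R y) = c * bilin M x y"
  and bilin_sum_right: "bilin M x (\<Sum>k\<in>K. f k) = (\<Sum>k\<in>K. bilin M x (f k))"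
  unfolding bilin_eq_vector_matrix by (simp_all add: inner_add_right inner_sum_right)

lemma inner_spfw_r: "inner s (spfw_r M z) = bilin M (fst s) (snd z) - bilin M (fst z) (snd s)"
  by (cases s) (simp add: spfw_r_def bilin_def, metis dot_lmul_matrix inner_commute)

lemma spfw_lmo_split:
  assumes "s \<in> X \<times> Y" "\<forall>s'\<in>X \<times> Y. inner s (spfw_r M z) \<le> inner s' (spfw_r M z)"
  shows "x' \<in> X \<Longrightarrow> bilin M (fst s) (snd z) \<le> bilin M x' (snd z)"
    and "y' \<in> Y \<Longrightarrow> bilin M (fst z) y' \<le> bilin M (fst z) (snd s)"
proof -
  show "bilin M (fst s) (snd z) \<le> bilin M x' (snd z)" if "x' \<in> X"
    using assms(2)[rule_format, of "(x', snd s)"] assms(1) that by (auto simp: inner_spfw_r)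
  show "bilin M (fst z) y' \<le> bilin M (fst z) (snd s)" if "y' \<in> Y"
    using assms(2)[rule_format, of "(fst s, y')"] assms(1) that by (auto simp: inner_spfw_r)
qed

lemma bilin_le_on_convex_hull:
  assumes "finite V" "y \<in> convex hull V" "\<And>w. w \<in> V \<Longrightarrow> bilin M x w \<le> c"
  shows "bilin M x y \<le> c"
proof -
  obtain u where u: "\<forall>w\<in>V. 0 \<le> u w" "sum u V = 1" "(\<Sum>w\<in>V. u w *\<^sub>R w) = y"
    using assms(2) unfolding convex_hull_finite[OF assms(1)] by blast
  have "bilin M x y = (\<Sum>w\<in>V. u w * bilin M x w)"
    unfolding u(3)[symmetric] by (simp add: bilin_sum_right bilin_scaleR_right)
  also have "\<dots> \<le> sum u V * c"
    using u(1) assms(3) by (intro weighted_sum_le) auto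
  finally show ?thesis
    using u(2) by simp
qed

lemma bilin_ge_on_convex_hull:
  assumes "finite V" "x \<in> convex hull V" "\<And>v. v \<in> V \<Longrightarrow> c \<le> bilin M v y"
  shows "c \<le> bilin M x y"
proof -
  obtain u where u: "\<forall>v\<in>V. 0 \<le> u v" "sum u V = 1" "(\<Sum>v\<in>V. u v *\<^sub>R v) = x"
    using assms(2) unfolding convex_hull_finite[OF assms(1)] by blast
  have "sum u V * c \<le> (\<Sum>v\<in>V. u v * bilin M v y)"
    using u(1) assms(3) by (intro weighted_sum_ge) auto
  also have "\<dots> = bilin M x y"
    unfolding u(3)[symmetric] by (simp add: bilin_sum_left bilin_scaleR_left)
  finally show ?thesis
    using u(2) by simp
qed

lemma dgap_le_vertex_bounds:
  assumes "x \<in> X" "y \<in> Y"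
    and "finite VX" "X = convex hull VX" "finite VY" "Y = convex hull VY"
    and hi: "\<And>w. w \<in> VY \<Longrightarrow> bilin M x w \<le> hi"
    and lo: "\<And>v. v \<in> VX \<Longrightarrow> lo \<le> bilin M v y"
  shows "0 \<le> dgap M X Y (x, y)" and "dgap M X Y (x, y) \<le> hi - lo"
proof -
  have hi': "bilin M x y' \<le> hi" if "y' \<in> Y" for y'
    using that assms(5,6) hi by (auto intro: bilin_le_on_convex_hull)
  have lo': "lo \<le> bilin M x' y" if "x' \<in> X" for x'
    using that assms(3,4) lo by (auto intro: bilin_ge_on_convex_hull)
  have "(SUP y'\<in>Y. bilin M x y') \<le> hi"
    using assms(2) hi' by (intro cSUP_least) auto
  moreover have "lo \<le> (INF x'\<in>X. bilin M x' y)"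
    using assms(1) lo' by (intro cINF_greatest) auto
  moreover have "bilin M x y \<le> (SUP y'\<in>Y. bilin M x y')"
    using assms(2) hi' by (intro cSUP_upper bdd_aboveI2)
  moreover have "(INF x'\<in>X. bilin M x' y) \<le> bilin M x y"
    using assms(1) lo' by (intro cINF_lower bdd_belowI2)
  ultimately show "0 \<le> dgap M X Y (x, y)" "dgap M X Y (x, y) \<le> hi - lo"
    unfolding dgap_def by simp_all
qed

lemma averaging_step:
  fixes z s :: "nat \<Rightarrow> 'a::real_vector"
  assumes "z (Suc t) = (1 - 1 / (real t + 1)) *\<^sub>R z t + (1 / (real t + 1)) *\<^sub>R s t"
  shows "real (Suc t) *\<^sub>R z (Suc t) = real t *\<^sub>R z t + s t"
proof -
  have "real (Suc t) *\<^sub>R z (Suc t)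
      = (real (Suc t) * (1 - 1 / (real t + 1))) *\<^sub>R z t + (real (Suc t) * (1 / (real t + 1))) *\<^sub>R s t"
    unfolding assms by (simp only: scaleR_add_right scaleR_scaleR)
  moreover have "real (Suc t) * (1 - 1 / (real t + 1)) = real t" "real (Suc t) * (1 / (real t + 1)) = 1"
    by (simp_all add: field_simps)
  ultimately show ?thesis
    by (metis scaleR_one)
qed

lemma convex_averaging_mem:
  fixes z s :: "nat \<Rightarrow> 'a::real_vector"
  assumes "convex C" "z 0 \<in> C" "\<And>t. s t \<in> C"
    and "\<And>t. z (Suc t) = (1 - 1 / (real t + 1)) *\<^sub>R z t + (1 / (real t + 1)) *\<^sub>R s t"
  shows "z t \<in> C"
proof (induction t)
  case (Suc t)
  then show ?case
    unfolding assms(4) using assms(3) by (intro convexD[OF assms(1)]) (auto simp: field_simps)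
qed (use assms(2) in simp)

locale sp_fw =
  fixes M :: "real^'m::finite^'n::finite" and X :: "(real^'n) set" and Y :: "(real^'m) set"
    and z s :: "nat \<Rightarrow> (real^'n) \<times> (real^'m)"
  assumes polytope_X: "polytope X" and polytope_Y: "polytope Y"
    and start: "z 0 \<in> X \<times> Y"
    and lmo: "\<And>t. s t \<in> X \<times> Y \<and>
      (\<forall>s'\<in>X \<times> Y. inner (s t) (spfw_r M (z t)) \<le> inner s' (spfw_r M (z t)))"
    and step: "\<And>t. z (Suc t) = (1 - 1 / (real t + 1)) *\<^sub>R z t + (1 / (real t + 1)) *\<^sub>R s t"
begin

abbreviation VX :: "(real^'n) set" where
  "VX \<equiv> {v. v extreme_point_of X}"

abbreviation VY :: "(real^'m) set" where
  "VY \<equiv> {w. w extreme_point_of Y}"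

(* Vertices of X index the rows and vertices of Y the columns; both are embedded in one sum type
   because a vector system, being closed under transposition, uses a single index type. *)
abbreviation row_payoff :: "nat \<Rightarrow> (real^'n) + (real^'m) \<Rightarrow> real" where
  "row_payoff \<equiv> \<lambda>t u. real t * bilin M (projl u) (snd (z t))"

abbreviation col_payoff :: "nat \<Rightarrow> (real^'n) + (real^'m) \<Rightarrow> real" where
  "col_payoff \<equiv> \<lambda>t w. real t * bilin M (fst (z t)) (projr w)"

lemma finite_VX: "finite VX" and finite_VY: "finite VY"
  using polytope_X polytope_Y by (simp_all add: finite_polyhedron_extreme_points polytope_imp_polyhedron)

lemma X_eq_hull: "X = convex hull VX" and Y_eq_hull: "Y = convex hull VY"
  using polytope_X polytope_Y
  by (simp_all add: Krein_Milman_Minkowski polytope_imp_compact polytope_imp_convex)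

lemma VX_subset: "VX \<subseteq> X" and VY_subset: "VY \<subseteq> Y"
  by (auto simp: extreme_point_of_def)

lemma lmo_mem: "s t \<in> X \<times> Y"
  using lmo by blast

lemma iterate_mem: "z t \<in> X \<times> Y"
proof (rule convex_averaging_mem[OF _ start lmo_mem step])
  show "convex (X \<times> Y)"
    using polytope_X polytope_Y by (simp add: convex_Times polytope_imp_convex)
qed

lemma VX_nonempty: "VX \<noteq> {}" and VY_nonempty: "VY \<noteq> {}"
proof -
  have "X \<noteq> {}" "Y \<noteq> {}"
    using iterate_mem[of 0] by auto
  then show "VX \<noteq> {}" "VY \<noteq> {}"
    using X_eq_hull Y_eq_hull by auto
qed

lemma vertex_weights:
  obtains lx :: "nat \<Rightarrow> real^'n \<Rightarrow> real" and ly :: "nat \<Rightarrow> real^'m \<Rightarrow> real"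
  where "\<And>t v. v \<in> VX \<Longrightarrow> 0 \<le> lx t v" "\<And>t. sum (lx t) VX = 1" "\<And>t. (\<Sum>v\<in>VX. lx t v *\<^sub>R v) = fst (s t)"
    and "\<And>t w. w \<in> VY \<Longrightarrow> 0 \<le> ly t w" "\<And>t. sum (ly t) VY = 1" "\<And>t. (\<Sum>w\<in>VY. ly t w *\<^sub>R w) = snd (s t)"
proof -
  have "\<exists>lx. \<forall>t. (\<forall>v\<in>VX. 0 \<le> lx t v) \<and> sum (lx t) VX = 1 \<and> (\<Sum>v\<in>VX. lx t v *\<^sub>R v) = fst (s t)"
  proof (intro choice allI)
    fix t
    have "fst (s t) \<in> convex hull VX"
      using lmo_mem[of t] X_eq_hull by (auto simp: mem_Times_iff)
    then show "\<exists>u. (\<forall>v\<in>VX. 0 \<le> u v) \<and> sum u VX = 1 \<and> (\<Sum>v\<in>VX. u v *\<^sub>R v) = fst (s t)"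
      unfolding convex_hull_finite[OF finite_VX] by blast
  qed
  moreover have "\<exists>ly. \<forall>t. (\<forall>w\<in>VY. 0 \<le> ly t w) \<and> sum (ly t) VY = 1 \<and> (\<Sum>w\<in>VY. ly t w *\<^sub>R w) = snd (s t)"
  proof (intro choice allI)
    fix t
    have "snd (s t) \<in> convex hull VY"
      using lmo_mem[of t] Y_eq_hull by (auto simp: mem_Times_iff)
    then show "\<exists>u. (\<forall>w\<in>VY. 0 \<le> u w) \<and> sum u VY = 1 \<and> (\<Sum>w\<in>VY. u w *\<^sub>R w) = snd (s t)"
      unfolding convex_hull_finite[OF finite_VY] by blast
  qed
  ultimately obtain lx ly where
    lx: "\<forall>t. (\<forall>v\<in>VX. 0 \<le> lx t v) \<and> sum (lx t) VX = 1 \<and> (\<Sum>v\<in>VX. lx t v *\<^sub>R v) = fst (s t)" and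
    ly: "\<forall>t. (\<forall>w\<in>VY. 0 \<le> ly t w) \<and> sum (ly t) VY = 1 \<and> (\<Sum>w\<in>VY. ly t w *\<^sub>R w) = snd (s t)"
    by (elim exE)
  show ?thesis
    by (rule that[of lx ly]) (use lx ly in auto)
qed

lemma lmo_X: "x' \<in> X \<Longrightarrow> bilin M (fst (s t)) (snd (z t)) \<le> bilin M x' (snd (z t))"
  and lmo_Y: "y' \<in> Y \<Longrightarrow> bilin M (fst (z t)) y' \<le> bilin M (fst (z t)) (snd (s t))"
  using spfw_lmo_split[OF lmo_mem conjunct2[OF lmo]] by blast+

lemma support_minimizes:
  assumes "\<And>v. v \<in> VX \<Longrightarrow> 0 \<le> lx v" "sum lx VX = 1" "(\<Sum>v\<in>VX. lx v *\<^sub>R v) = fst (s t)"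
    and "v \<in> VX" "lx v \<noteq> 0" "v' \<in> VX"
  shows "bilin M v (snd (z t)) \<le> bilin M v' (snd (z t))"
proof -
  define m where "m = bilin M (fst (s t)) (snd (z t))"
  have m_le: "m \<le> bilin M v'' (snd (z t))" if "v'' \<in> VX" for v''
    unfolding m_def using that VX_subset by (intro lmo_X) auto
  have avg: "(\<Sum>v\<in>VX. lx v * bilin M v (snd (z t))) = m"
    unfolding m_def assms(3)[symmetric] by (simp add: bilin_sum_left bilin_scaleR_left)
  have "bilin M v (snd (z t)) = m"
    using convex_combination_eq_min_support[OF finite_VX assms(1,2) m_le avg assms(4,5)] .
  then show ?thesis
    using m_le[OF assms(6)] by simp
qed

lemma support_maximizes:
  assumes "\<And>w. w \<in> VY \<Longrightarrow> 0 \<le> ly w" "sum ly VY = 1" "(\<Sum>w\<in>VY. ly w *\<^sub>R w) = snd (s t)"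
    and "w \<in> VY" "ly w \<noteq> 0" "w' \<in> VY"
  shows "bilin M (fst (z t)) w' \<le> bilin M (fst (z t)) w"
proof -
  define m where "m = - bilin M (fst (z t)) (snd (s t))"
  have m_le: "m \<le> - bilin M (fst (z t)) w''" if "w'' \<in> VY" for w''
    unfolding m_def using lmo_Y[of w'' t] that VY_subset by auto
  have avg: "(\<Sum>w\<in>VY. ly w * - bilin M (fst (z t)) w) = m"
    unfolding m_def assms(3)[symmetric] by (simp add: bilin_sum_right bilin_scaleR_right sum_negf)
  have "- bilin M (fst (z t)) w = m"
    using convex_combination_eq_min_support[OF finite_VY assms(1,2) m_le avg assms(4,5)] .
  then show ?thesis
    using m_le[OF assms(6)] by simp
qed

lemma scaled_iterate_step:
  "real (Suc t) * bilin M v (snd (z (Suc t))) = real t * bilin M v (snd (z t)) + bilin M v (snd (s t))"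
  "real (Suc t) * bilin M (fst (z (Suc t))) w = real t * bilin M (fst (z t)) w + bilin M (fst (s t)) w"
proof -
  have scaled: "real (Suc t) *\<^sub>R z (Suc t) = real t *\<^sub>R z t + s t"
    by (rule averaging_step[where z = z and s = s and t = t, OF step])
  have "real (Suc t) *\<^sub>R snd (z (Suc t)) = real t *\<^sub>R snd (z t) + snd (s t)"
    using arg_cong[where f = snd, OF scaled] by simp
  moreover have "real (Suc t) *\<^sub>R fst (z (Suc t)) = real t *\<^sub>R fst (z t) + fst (s t)"
    using arg_cong[where f = fst, OF scaled] by simp
  ultimately
  have "bilin M v (real (Suc t) *\<^sub>R snd (z (Suc t))) = bilin M v (real t *\<^sub>R snd (z t) + snd (s t))"
    and "bilin M (real (Suc t) *\<^sub>R fst (z (Suc t))) w = bilin M (real t *\<^sub>R fst (z t) + fst (s t)) w"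
    by simp_all
  then show "real (Suc t) * bilin M v (snd (z (Suc t))) = real t * bilin M v (snd (z t)) + bilin M v (snd (s t))"
    and "real (Suc t) * bilin M (fst (z (Suc t))) w = real t * bilin M (fst (z t)) w + bilin M (fst (s t)) w"
    by (simp_all only: bilin_add_left bilin_add_right bilin_scaleR_left bilin_scaleR_right)
qed

lemma vertex_vector_system:
  assumes lx: "\<And>t v. v \<in> VX \<Longrightarrow> 0 \<le> lx t v" "\<And>t. sum (lx t) VX = 1"
      "\<And>t. (\<Sum>v\<in>VX. lx t v *\<^sub>R v) = fst (s t)"
    and ly: "\<And>t w. w \<in> VY \<Longrightarrow> 0 \<le> ly t w" "\<And>t. sum (ly t) VY = 1"
      "\<And>t. (\<Sum>w\<in>VY. ly t w *\<^sub>R w) = snd (s t)"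
    and A: "\<And>v w. v \<in> VX \<Longrightarrow> w \<in> VY \<Longrightarrow> \<bar>bilin M v w\<bar> \<le> A"
  shows "vector_system (Inl ` VX) (Inr ` VY) (\<lambda>u w. bilin M (projl u) (projr w)) A T
    row_payoff col_payoff (\<lambda>t u. lx t (projl u)) (\<lambda>t w. ly t (projr w))"
proof -
  have sum_Inl: "(\<Sum>u\<in>Inl ` VX. f u) = (\<Sum>v\<in>VX. f (Inl v))" for f :: "(real^'n) + (real^'m) \<Rightarrow> real"
    by (simp add: sum.reindex)
  have sum_Inr: "(\<Sum>u\<in>Inr ` VY. f u) = (\<Sum>w\<in>VY. f (Inr w))" for f :: "(real^'n) + (real^'m) \<Rightarrow> real"
    by (simp add: sum.reindex)
  have Min_rows: "Min ((\<lambda>u. real t * bilin M (projl u) (snd (z t))) ` Inl ` VX) = real t * bilin M v (snd (z t))"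
    if "v \<in> VX" "lx t v \<noteq> 0" for t v
    using that finite_VX support_minimizes[OF lx(1,2,3) that]
    by (intro Min_eqI) (auto simp: image_image intro: mult_left_mono)
  have Max_cols: "Max ((\<lambda>u. real t * bilin M (fst (z t)) (projr u)) ` Inr ` VY) = real t * bilin M (fst (z t)) w"
    if "w \<in> VY" "ly t w \<noteq> 0" for t w
    using that finite_VY support_maximizes[OF ly(1,2,3) that]
    by (intro Max_eqI) (auto simp: image_image intro: mult_left_mono)
  have row_average: "(\<Sum>v\<in>VX. lx t v * bilin M v w) = bilin M (fst (s t)) w" for t w
    unfolding lx(3)[symmetric] by (simp add: bilin_sum_left bilin_scaleR_left)
  have col_average: "(\<Sum>w\<in>VY. ly t w * bilin M v w) = bilin M v (snd (s t))" for t v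
    unfolding ly(3)[symmetric] by (simp add: bilin_sum_right bilin_scaleR_right)
  show ?thesis
    by unfold_locales
      (use finite_VX finite_VY VX_nonempty VY_nonempty A lx ly in \<open>auto simp del: of_nat_Suc
        simp: Min_rows Max_cols sum_Inl sum_Inr row_average col_average scaled_iterate_step\<close>)
qed

lemma dgap_iterate_le:
  assumes "1 \<le> t"
  shows "0 \<le> dgap M X Y (z t)"
    and "dgap M X Y (z t) \<le> system_gap (Inl ` VX) (Inr ` VY) (row_payoff t) (col_payoff t) / real t"
proof -
  have t: "0 < real t"
    using assms by simp
  have hi: "bilin M (fst (z t)) w \<le> Max (col_payoff t ` Inr ` VY) / real t" if "w \<in> VY" for w
  proof -
    have "col_payoff t (Inr w) \<le> Max (col_payoff t ` Inr ` VY)"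
      using that finite_VY by (intro Max_ge) (auto simp: image_image)
    then show ?thesis
      using t by (simp add: field_simps)
  qed
  have lo: "Min (row_payoff t ` Inl ` VX) / real t \<le> bilin M v (snd (z t))" if "v \<in> VX" for v
  proof -
    have "Min (row_payoff t ` Inl ` VX) \<le> row_payoff t (Inl v)"
      using that finite_VX by (intro Min_le) (auto simp: image_image)
    then show ?thesis
      using t by (simp add: field_simps)
  qed
  note vertex_bounds = dgap_le_vertex_bounds[of "fst (z t)" X "snd (z t)" Y, OF _ _ finite_VX X_eq_hull
      finite_VY Y_eq_hull hi lo]
  show "0 \<le> dgap M X Y (z t)"
    using vertex_bounds(1) iterate_mem[of t] by (simp add: mem_Times_iff)
  show "dgap M X Y (z t) \<le> system_gap (Inl ` VX) (Inr ` VY) (row_payoff t) (col_payoff t) / real t"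
    using vertex_bounds(2) iterate_mem[of t] by (simp add: mem_Times_iff system_gap_def diff_divide_distrib)
qed

theorem dgap_rate:
  "(\<lambda>t. dgap M X Y (z t)) \<in> O(\<lambda>t. real t powr (- 1 / (real (card VX) + real (card VY) - 2)))"
proof -
  obtain lx ly where lx: "\<And>t v. v \<in> VX \<Longrightarrow> 0 \<le> lx t v" "\<And>t. sum (lx t) VX = 1"
      "\<And>t. (\<Sum>v\<in>VX. lx t v *\<^sub>R v) = fst (s t)"
    and ly: "\<And>t w. w \<in> VY \<Longrightarrow> 0 \<le> ly t w" "\<And>t. sum (ly t) VY = 1"
      "\<And>t. (\<Sum>w\<in>VY. ly t w *\<^sub>R w) = snd (s t)"
    by (rule vertex_weights) blast
  define A where "A = (\<Sum>v\<in>VX. \<Sum>w\<in>VY. \<bar>bilin M v w\<bar>)"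
  have A_bound: "\<bar>bilin M v w\<bar> \<le> A" if "v \<in> VX" "w \<in> VY" for v w
  proof -
    have "\<bar>bilin M v w\<bar> \<le> (\<Sum>w'\<in>VY. \<bar>bilin M v w'\<bar>)"
      using that finite_VY by (intro member_le_sum) auto
    also have "\<dots> \<le> A"
      unfolding A_def using that finite_VX by (intro member_le_sum sum_nonneg) auto
    finally show ?thesis .
  qed
  define N where "N = card VX + card VY"
  have cards: "card (Inl ` VX) + card (Inr ` VY) = N"
    unfolding N_def by (simp add: card_image)
  have "col_payoff 0 ` Inr ` VY = {0}" "row_payoff 0 ` Inl ` VX = {0}"
    using VX_nonempty VY_nonempty by auto
  then have "system_gap (Inl ` VX) (Inr ` VY) (row_payoff 0) (col_payoff 0) \<le> 0"
    by (simp add: system_gap_def)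
  then have gap_bound: "system_gap (Inl ` VX) (Inr ` VY) (row_payoff t) (col_payoff t)
      \<le> 8 * real N * A * real t powr robinson_exponent N" for t
    using robinson_gap_bound[OF vertex_vector_system[OF lx ly A_bound, of "Suc t"], of t]
    unfolding cards by simp
  have "dgap M X Y (z t) \<le> 8 * real N * A * real t powr (- 1 / (real (card VX) + real (card VY) - 2))"
    if "1 \<le> t" for t
  proof -
    have "dgap M X Y (z t) \<le> 8 * real N * A * real t powr robinson_exponent N / real t"
      using order_trans[OF dgap_iterate_le(2)[OF that] divide_right_mono[OF gap_bound[of t]]] by simp
    also have "\<dots> = 8 * real N * A * real t powr (- 1 / (real (card VX) + real (card VY) - 2))"
      using that by (simp add: robinson_exponent_def N_def powr_diff powr_minus_divide)
    finally show ?thesis .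
  qed
  then show ?thesis
    using dgap_iterate_le(1)
    by (intro bigoI[where c = "8 * real N * A"] eventually_mono[OF eventually_ge_at_top[of 1]]) auto
qed

end

theorem corollary5:
  fixes M :: "real^'m^'n"
    and X :: "(real^'n) set" and Y :: "(real^'m) set"
    and p q :: nat
    and z s :: "nat \<Rightarrow> (real^'n) \<times> (real^'m)"
  assumes "polytope X" and "polytope Y"
    and "card {v. v extreme_point_of X} = p"
    and "card {v. v extreme_point_of Y} = q"
    and "z 0 \<in> X \<times> Y"
    and "\<And>t. s t \<in> X \<times> Y \<and>
              (\<forall>s'\<in>X \<times> Y. inner (s t) (spfw_r M (z t)) \<le> inner s' (spfw_r M (z t)))"
    and "\<And>t. z (Suc t) = (1 - 1 / (real t + 1)) *\<^sub>R z t + (1 / (real t + 1)) *\<^sub>R s t"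
  shows "(\<lambda>t. dgap M X Y (z t)) \<in> O(\<lambda>t. real t powr (- 1 / (real p + real q - 2)))"
proof -
  interpret sp_fw M X Y z s
    using assms(1,2,5-7) by unfold_locales
  show ?thesis
    using dgap_rate unfolding assms(3,4) .
qed

end
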